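(* The dual-rail Bell state $Q=\frac{1}{\sqrt2}\big(a^\dagger_1a^\dagger_3+a^\dagger_2a^\dagger_4\big)$ (i.e. $(|1,0,1,0\rangle+|0,1,0,1\rangle)/\sqrt2$) cannot be generated by heralded linear optics from any multi-mode Fock input state containing three photons. In particular, for $N=5$, input $|1,1,1,0,0\rangle$ and heralding pattern $(1)$ on mode $5$, there is no complex $5\times5$ matrix $A$ and no $\gamma\in\mathbb{C}$ with $\gamma G=Q$.
   Context: Heralded linear-optical state generation model. States with a fixed photon number are homogeneous polynomials in commuting variables $a^\dagger_1,\dots,a^\dagger_N$ applied to the vacuum. Given $N$ modes, an arbitrary complex $N\times N$ matrix $A$ (not required to be unitary), and a Fock input $\prod_{i=1}^N\frac{1}{\sqrt{n_i!}}(a^\dagger_{i,\mathrm{in}})^{n_i}|0\rangle$, the output is $F|0\rangle$ with $F=\prod_{i=1}^N\frac{1}{\sqrt{n_i!}}\big(\sum_{j=1}^N A_{i,j}a^\dagger_j\big)^{n_i}$. Heralding the last $M$ modes on the pattern $(m_1,\dots,m_M)$ (entries $\ge0$), $m=\sum_jm_j$, gives $G=\frac{1}{\prod_jm_j!}\,\frac{\partial^{m}F}{\partial(a^\dagger_{N-M+1})^{m_1}\cdots\partial(a^\dagger_N)^{m_M}}\Big|_{a^\dagger_{N-M+1}=\cdots=a^\dagger_N=0}$, a polynomial in $a^\dagger_1,\dots,a^\dagger_{N-M}$. A target $Q$ on the first $N_T\le N-M$ modes (other unheralded modes in vacuum) can be generated from a given input and heralding pattern if there exist a complex $N\times N$ matrix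 $A$ and $\gamma\in\mathbb{C}$ with $\gamma G=Q$; it can be generated from an $n$-photon Fock input if this holds for some number of modes, some Fock input with $n$ photons and some heralding pattern (necessarily with $n-\deg Q$ photons). *)

theory Defs
  imports Complex_Main "HOL-Library.Poly_Mapping"
begin

text \<open>Polynomials in commuting variables a_0^dag, a_1^dag, ... (mode i is variable i,
  modes are 0-indexed): a monomial is an exponent vector nat =>0 nat, a polynomial
  is a finitely supported map from monomials to complex coefficients.\<close>

type_synonym cpoly = "(nat \<Rightarrow>\<^sub>0 nat) \<Rightarrow>\<^sub>0 complex"

definition cvar :: "nat \<Rightarrow> cpoly" where
  "cvar i = Poly_Mapping.single (Poly_Mapping.single i 1) 1"

definition cconst :: "complex \<Rightarrow> cpoly" where
  "cconst c = Poly_Mapping.single 0 c"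

definition output_poly :: "nat \<Rightarrow> (nat \<Rightarrow> nat \<Rightarrow> complex) \<Rightarrow> (nat \<Rightarrow> nat) \<Rightarrow> cpoly" where
  "output_poly N A n =
     (\<Prod>i<N. cconst (1 / complex_of_real (sqrt (fact (n i))))
              * (\<Sum>j<N. cconst (A i j) * cvar j) ^ n i)"

text \<open>Heralding the last M of the N modes (modes N-M+k, k < M) on pattern m
  (m k photons in mode N-M+k).  The operation
  (1/prod m_k!) d^m F / d(a_{N-M+1})^{m_1}... evaluated at the heralded variables = 0
  maps a monomial x^alpha to x^(alpha - mu) if alpha agrees with mu = m on the
  heralded modes, and to 0 otherwise; extended linearly.\<close>

definition herald_monomial :: "nat \<Rightarrow> nat \<Rightarrow> (nat \<Rightarrow> nat) \<Rightarrow> (nat \<Rightarrow>\<^sub>0 nat)" where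
  "herald_monomial N M m = (\<Sum>k<M. Poly_Mapping.single (N - M + k) (m k))"

definition herald :: "nat \<Rightarrow> nat \<Rightarrow> (nat \<Rightarrow> nat) \<Rightarrow> cpoly \<Rightarrow> cpoly" where
  "herald N M m F =
     (\<Sum>\<alpha>\<in>Poly_Mapping.keys F.
        if (\<forall>k<M. Poly_Mapping.lookup \<alpha> (N - M + k) = m k)
        then Poly_Mapping.single (\<alpha> - herald_monomial N M m) (Poly_Mapping.lookup F \<alpha>)
        else 0)"

definition generable_from :: "cpoly \<Rightarrow> nat \<Rightarrow> (nat \<Rightarrow> nat) \<Rightarrow> nat \<Rightarrow> (nat \<Rightarrow> nat) \<Rightarrow> bool" where
  "generable_from Q N n M m \<longleftrightarrow>
     (\<exists>A :: nat \<Rightarrow> nat \<Rightarrow> complex. \<exists>\<gamma> :: complex.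
        cconst \<gamma> * herald N M m (output_poly N A n) = Q)"

text \<open>Dual-rail Bell state (1/sqrt 2)(a1 a3 + a2 a4); with 0-indexed modes 0,1,2,3.\<close>

definition bell_dual_rail :: cpoly where
  "bell_dual_rail = cconst (1 / complex_of_real (sqrt 2)) * (cvar 0 * cvar 2 + cvar 1 * cvar 3)"

end

theory Submission
  imports Defs "Jordan_Normal_Form.Determinant"
begin

text \<open>
  A Fock input with three photons occupies at most three input modes, so the linear forms
  \<open>v \<mapsto> \<Sum>j<4. A i j * v j\<close> of the occupied rows have a common nonzero zero \<open>v\<close>
  supported on the four Bell modes. Translating the unheralded variables by \<open>v\<close> leaves
  every factor of \<open>F\<close> with photons unchanged. Heralding is coefficient extraction: the
  heralded polynomial \<open>G\<close>, evaluated at \<open>x\<close>, is the coefficient of the heralded monomial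
  in \<open>F\<close> after the unheralded modes are evaluated at \<open>x\<close>. Hence \<open>G\<close> is invariant under
  translation by \<open>v\<close> as a function, whereas the nondegenerate quadratic form
  \<open>x\<^sub>0 x\<^sub>2 + x\<^sub>1 x\<^sub>3\<close> admits no nonzero translation invariance.
\<close>

section \<open>Substitution and evaluation of polynomials\<close>

lemma poly_mapping_sum_single:
  "P = (\<Sum>\<alpha>\<in>Poly_Mapping.keys P. Poly_Mapping.single \<alpha> (Poly_Mapping.lookup P \<alpha>))"
  by (rule poly_mapping_eqI) (simp add: lookup_sum lookup_single when_def in_keys_iff)

lemma sum_single: "(\<Sum>i\<in>I. Poly_Mapping.single k (c i)) = Poly_Mapping.single k (\<Sum>i\<in>I. c i)"
  by (induction I rule: infinite_finite_induct) (simp_all add: single_add)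

lemma prod_single:
  "(\<Prod>i\<in>I. Poly_Mapping.single (k i) (c i)) = Poly_Mapping.single (\<Sum>i\<in>I. k i) (\<Prod>i\<in>I. c i)"
  by (induction I rule: infinite_finite_induct) (simp_all add: mult_single)

lemma power_single_zero: "Poly_Mapping.single 0 c ^ n = Poly_Mapping.single 0 (c ^ n)"
  by (induction n) (simp_all add: mult_single)

lemma lookup_single_zero_mult:
  "Poly_Mapping.lookup (Poly_Mapping.single 0 c * p) \<alpha> = c * Poly_Mapping.lookup p \<alpha>"
  by (simp flip: mult_map_scale_conv_mult add: Poly_Mapping.map.rep_eq when_def)

definition monomial_value :: "('v \<Rightarrow> 'b::comm_monoid_mult) \<Rightarrow> ('v \<Rightarrow>\<^sub>0 nat) \<Rightarrow> 'b" where
  "monomial_value g \<alpha> = (\<Prod>i\<in>Poly_Mapping.keys \<alpha>. g i ^ Poly_Mapping.lookup \<alpha> i)"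

lemma monomial_value_superset:
  assumes "finite K" "Poly_Mapping.keys \<alpha> \<subseteq> K"
  shows "monomial_value g \<alpha> = (\<Prod>i\<in>K. g i ^ Poly_Mapping.lookup \<alpha> i)"
  unfolding monomial_value_def
  by (rule prod.mono_neutral_left) (use assms in \<open>auto simp: in_keys_iff\<close>)

lemma monomial_value_cong:
  "(\<And>i. i \<in> Poly_Mapping.keys \<alpha> \<Longrightarrow> g i = h i) \<Longrightarrow> monomial_value g \<alpha> = monomial_value h \<alpha>"
  unfolding monomial_value_def by (rule prod.cong) simp_all

lemma monomial_value_zero [simp]: "monomial_value g 0 = 1"
  by (simp add: monomial_value_def)

lemma monomial_value_single [simp]: "monomial_value g (Poly_Mapping.single i k) = g i ^ k"
  by (cases "k = 0") (simp_all add: monomial_value_def)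

lemma monomial_value_add: "monomial_value g (\<alpha> + \<beta>) = monomial_value g \<alpha> * monomial_value g \<beta>"
proof -
  let ?K = "Poly_Mapping.keys \<alpha> \<union> Poly_Mapping.keys \<beta>"
  have "monomial_value g (\<alpha> + \<beta>) = (\<Prod>i\<in>?K. g i ^ Poly_Mapping.lookup (\<alpha> + \<beta>) i)"
    by (rule monomial_value_superset) (auto dest: keys_add[THEN subsetD])
  also have "\<dots> = (\<Prod>i\<in>?K. g i ^ Poly_Mapping.lookup \<alpha> i) * (\<Prod>i\<in>?K. g i ^ Poly_Mapping.lookup \<beta> i)"
    by (simp add: lookup_add power_add prod.distrib)
  also have "\<dots> = monomial_value g \<alpha> * monomial_value g \<beta>"
    using monomial_value_superset[of ?K \<alpha> g] monomial_value_superset[of ?K \<beta> g] by simp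
  finally show ?thesis .
qed

lemma monomial_value_constants:
  "monomial_value (\<lambda>i. Poly_Mapping.single 0 (x i)) \<alpha> = Poly_Mapping.single 0 (monomial_value x \<alpha>)"
  by (simp add: monomial_value_def power_single_zero prod_single)

definition poly_subst ::
  "('v \<Rightarrow> ('w \<Rightarrow>\<^sub>0 nat) \<Rightarrow>\<^sub>0 'a) \<Rightarrow> (('v \<Rightarrow>\<^sub>0 nat) \<Rightarrow>\<^sub>0 'a) \<Rightarrow> ('w \<Rightarrow>\<^sub>0 nat) \<Rightarrow>\<^sub>0 'a::comm_semiring_1"
where
  "poly_subst g P =
     (\<Sum>\<alpha>\<in>Poly_Mapping.keys P. Poly_Mapping.single 0 (Poly_Mapping.lookup P \<alpha>) * monomial_value g \<alpha>)"

lemma poly_subst_superset: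
  assumes "finite K" "Poly_Mapping.keys P \<subseteq> K"
  shows "poly_subst g P =
    (\<Sum>\<alpha>\<in>K. Poly_Mapping.single 0 (Poly_Mapping.lookup P \<alpha>) * monomial_value g \<alpha>)"
  unfolding poly_subst_def
  by (rule sum.mono_neutral_left) (use assms in \<open>auto simp: in_keys_iff\<close>)

lemma poly_subst_zero [simp]: "poly_subst g 0 = 0"
  by (simp add: poly_subst_def)

lemma poly_subst_single:
  "poly_subst g (Poly_Mapping.single \<alpha> c) = Poly_Mapping.single 0 c * monomial_value g \<alpha>"
  by (subst poly_subst_superset[of "{\<alpha>}"]) auto

lemma poly_subst_add: "poly_subst g (P + Q) = poly_subst g P + poly_subst g Q"
proof -
  let ?K = "Poly_Mapping.keys P \<union> Poly_Mapping.keys Q"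
  show ?thesis
    using poly_subst_superset[of ?K P g] poly_subst_superset[of ?K Q g]
      poly_subst_superset[of ?K "P + Q" g]
    by (auto simp: lookup_add single_add distrib_right sum.distrib dest: keys_add[THEN subsetD])
qed

lemma poly_subst_sum: "poly_subst g (\<Sum>i\<in>I. P i) = (\<Sum>i\<in>I. poly_subst g (P i))"
  by (induction I rule: infinite_finite_induct) (simp_all add: poly_subst_add)

lemma poly_subst_mult: "poly_subst g (P * Q) = poly_subst g P * poly_subst g Q"
proof -
  let ?c = "\<lambda>P \<alpha>. Poly_Mapping.lookup P \<alpha>"
  have "P * Q = (\<Sum>\<alpha>\<in>Poly_Mapping.keys P. \<Sum>\<beta>\<in>Poly_Mapping.keys Q.
                    Poly_Mapping.single (\<alpha> + \<beta>) (?c P \<alpha> * ?c Q \<beta>))"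
    by (subst poly_mapping_sum_single[of P], subst poly_mapping_sum_single[of Q])
      (simp add: sum_product mult_single)
  then have "poly_subst g (P * Q) = (\<Sum>\<alpha>\<in>Poly_Mapping.keys P. \<Sum>\<beta>\<in>Poly_Mapping.keys Q.
      Poly_Mapping.single 0 (?c P \<alpha>) * monomial_value g \<alpha> *
      (Poly_Mapping.single 0 (?c Q \<beta>) * monomial_value g \<beta>))"
    by (simp add: poly_subst_sum poly_subst_single mult_single monomial_value_add mult_ac)
  also have "\<dots> = poly_subst g P * poly_subst g Q"
    by (simp add: poly_subst_def sum_product)
  finally show ?thesis .
qed

lemma poly_subst_one [simp]: "poly_subst g 1 = 1"
  using poly_subst_single[of g 0 1] by simp

lemma poly_subst_prod: "poly_subst g (\<Prod>i\<in>I. P i) = (\<Prod>i\<in>I. poly_subst g (P i))"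
  by (induction I rule: infinite_finite_induct)
    (simp_all add: poly_subst_mult)

lemma poly_subst_power: "poly_subst g (P ^ k) = poly_subst g P ^ k"
  using poly_subst_prod[of g "\<lambda>_. P" "{..<k}"] by simp

definition poly_eval :: "('v \<Rightarrow> 'a) \<Rightarrow> (('v \<Rightarrow>\<^sub>0 nat) \<Rightarrow>\<^sub>0 'a) \<Rightarrow> 'a::comm_semiring_1" where
  "poly_eval x P = (\<Sum>\<alpha>\<in>Poly_Mapping.keys P. Poly_Mapping.lookup P \<alpha> * monomial_value x \<alpha>)"

lemma poly_subst_constants:
  "poly_subst (\<lambda>i. Poly_Mapping.single 0 (x i)) P = Poly_Mapping.single 0 (poly_eval x P)"
  by (simp add: poly_subst_def poly_eval_def monomial_value_constants mult_single sum_single)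

lemma poly_eval_zero [simp]: "poly_eval x 0 = 0"
  by (simp add: poly_eval_def)

lemma poly_eval_add: "poly_eval x (P + Q) = poly_eval x P + poly_eval x Q"
  using poly_subst_add[of "\<lambda>i. Poly_Mapping.single 0 (x i)" P Q]
  by (simp add: poly_subst_constants inj_single[THEN inj_eq] flip: single_add)

lemma poly_eval_mult: "poly_eval x (P * Q) = poly_eval x P * poly_eval x Q"
  using poly_subst_mult[of "\<lambda>i. Poly_Mapping.single 0 (x i)" P Q]
  by (simp add: poly_subst_constants mult_single inj_single[THEN inj_eq])

lemma poly_eval_sum: "poly_eval x (\<Sum>i\<in>I. P i) = (\<Sum>i\<in>I. poly_eval x (P i))"
  using poly_subst_sum[of "\<lambda>i. Poly_Mapping.single 0 (x i)" P I]
  by (simp add: poly_subst_constants sum_single inj_single[THEN inj_eq])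

lemma poly_eval_single: "poly_eval x (Poly_Mapping.single \<alpha> c) = c * monomial_value x \<alpha>"
  using poly_subst_single[of "\<lambda>i. Poly_Mapping.single 0 (x i)" \<alpha> c]
  by (simp add: poly_subst_constants monomial_value_constants mult_single inj_single[THEN inj_eq])

lemma cconst_zero [simp]: "cconst 0 = 0"
  by (simp add: cconst_def)

lemma cconst_add: "cconst (a + b) = cconst a + cconst b"
  by (simp add: cconst_def single_add)

lemma cconst_mult: "cconst (a * b) = cconst a * cconst b"
  by (simp add: cconst_def mult_single)

lemma cconst_sum: "cconst (\<Sum>i\<in>I. f i) = (\<Sum>i\<in>I. cconst (f i))"
  by (simp add: cconst_def sum_single)

lemma cvar_power: "cvar i ^ k = Poly_Mapping.single (Poly_Mapping.single i k) 1"
  by (induction k) (simp_all add: cvar_def mult_single flip: single_add)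

lemma monomial_value_cvar: "monomial_value cvar \<alpha> = Poly_Mapping.single \<alpha> 1"
  by (simp add: monomial_value_def cvar_power prod_single flip: poly_mapping_sum_single)

lemma poly_subst_cconst [simp]: "poly_subst g (cconst c) = cconst c"
  by (simp add: cconst_def poly_subst_single)

lemma poly_subst_cvar [simp]: "poly_subst g (cvar i) = g i"
  by (simp add: cvar_def poly_subst_single)

lemma poly_eval_cconst [simp]: "poly_eval x (cconst c) = c"
  by (simp add: cconst_def poly_eval_single)

lemma poly_eval_cvar [simp]: "poly_eval x (cvar i) = x i"
  by (simp add: cvar_def poly_eval_single)

section \<open>Heralding\<close>

definition restrict_poly_mapping :: "'a set \<Rightarrow> ('a \<Rightarrow>\<^sub>0 'b::comm_monoid_add) \<Rightarrow> 'a \<Rightarrow>\<^sub>0 'b" where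
  "restrict_poly_mapping H p =
     (\<Sum>i\<in>Poly_Mapping.keys p \<inter> H. Poly_Mapping.single i (Poly_Mapping.lookup p i))"

lemma lookup_restrict_poly_mapping:
  "Poly_Mapping.lookup (restrict_poly_mapping H p) i =
    (if i \<in> H then Poly_Mapping.lookup p i else 0)"
  by (auto simp: restrict_poly_mapping_def lookup_sum lookup_single when_def in_keys_iff)

definition partial_eval :: "nat set \<Rightarrow> (nat \<Rightarrow> complex) \<Rightarrow> nat \<Rightarrow> cpoly" where
  "partial_eval H x j = (if j \<in> H then cvar j else cconst (x j))"

lemma monomial_value_partial_eval:
  fixes H :: "nat set" and \<alpha> :: "nat \<Rightarrow>\<^sub>0 nat"
  defines "\<beta> \<equiv> restrict_poly_mapping H \<alpha>"
  shows "monomial_value (partial_eval H x) \<alpha> = Poly_Mapping.single \<beta> (monomial_value x (\<alpha> - \<beta>))"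
proof -
  have lookup_\<beta>: "Poly_Mapping.lookup \<beta> i = (if i \<in> H then Poly_Mapping.lookup \<alpha> i else 0)" for i
    by (simp add: \<beta>_def lookup_restrict_poly_mapping)
  have "\<alpha> = \<beta> + (\<alpha> - \<beta>)"
    by (rule poly_mapping_eqI) (simp add: lookup_add lookup_minus lookup_\<beta>)
  moreover have "monomial_value (partial_eval H x) \<beta> = monomial_value cvar \<beta>"
    by (rule monomial_value_cong)
      (auto simp: partial_eval_def in_keys_iff lookup_\<beta> split: if_splits)
  moreover have "monomial_value (partial_eval H x) (\<alpha> - \<beta>) =
      monomial_value (\<lambda>i. Poly_Mapping.single 0 (x i)) (\<alpha> - \<beta>)"
    by (rule monomial_value_cong)
      (auto simp: partial_eval_def cconst_def in_keys_iff lookup_minus lookup_\<beta>)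
  ultimately have "monomial_value (partial_eval H x) \<alpha> =
      Poly_Mapping.single \<beta> 1 * Poly_Mapping.single 0 (monomial_value x (\<alpha> - \<beta>))"
    by (metis monomial_value_add monomial_value_cvar monomial_value_constants)
  then show ?thesis
    by (simp add: mult_single)
qed

lemma lookup_herald_monomial:
  assumes "M \<le> N"
  shows "Poly_Mapping.lookup (herald_monomial N M m) j =
    (if j \<in> {N - M..<N} then m (j - (N - M)) else 0)"
proof -
  have "Poly_Mapping.lookup (herald_monomial N M m) j =
      (\<Sum>k<M. if k = j - (N - M) \<and> N - M \<le> j then m k else 0)"
    unfolding herald_monomial_def lookup_sum lookup_single when_def by (rule sum.cong) auto
  then show ?thesis
    using assms by (auto simp: sum.If_cases)
qed

lemma heralding_condition_iff:
  assumes "M \<le> N"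
  shows "(\<forall>k<M. Poly_Mapping.lookup \<alpha> (N - M + k) = m k) \<longleftrightarrow>
    restrict_poly_mapping {N - M..<N} \<alpha> = herald_monomial N M m"
proof
  assume agree: "\<forall>k<M. Poly_Mapping.lookup \<alpha> (N - M + k) = m k"
  show "restrict_poly_mapping {N - M..<N} \<alpha> = herald_monomial N M m"
  proof (rule poly_mapping_eqI)
    fix j
    show "Poly_Mapping.lookup (restrict_poly_mapping {N - M..<N} \<alpha>) j =
        Poly_Mapping.lookup (herald_monomial N M m) j"
    proof (cases "j \<in> {N - M..<N}")
      case True
      then have "j = N - M + (j - (N - M))" "j - (N - M) < M" by auto
      then show ?thesis
        using agree True by (metis lookup_restrict_poly_mapping lookup_herald_monomial[OF assms])
    qed (auto simp: lookup_restrict_poly_mapping lookup_herald_monomial[OF assms])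
  qed
next
  assume eq: "restrict_poly_mapping {N - M..<N} \<alpha> = herald_monomial N M m"
  show "\<forall>k<M. Poly_Mapping.lookup \<alpha> (N - M + k) = m k"
  proof (intro allI impI)
    fix k assume "k < M"
    then have "N - M + k \<in> {N - M..<N}" using assms by auto
    then show "Poly_Mapping.lookup \<alpha> (N - M + k) = m k"
      using arg_cong[OF eq, of "\<lambda>p. Poly_Mapping.lookup p (N - M + k)"]
      by (simp add: lookup_restrict_poly_mapping lookup_herald_monomial[OF assms])
  qed
qed

lemma poly_eval_herald:
  assumes "M \<le> N"
  shows "poly_eval x (herald N M m F) =
    Poly_Mapping.lookup (poly_subst (partial_eval {N - M..<N} x) F) (herald_monomial N M m)"
  unfolding herald_def poly_eval_sum poly_subst_def lookup_sum
proof (rule sum.cong)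
  fix \<alpha>
  show "poly_eval x (if \<forall>k<M. Poly_Mapping.lookup \<alpha> (N - M + k) = m k
      then Poly_Mapping.single (\<alpha> - herald_monomial N M m) (Poly_Mapping.lookup F \<alpha>) else 0) =
    Poly_Mapping.lookup (Poly_Mapping.single 0 (Poly_Mapping.lookup F \<alpha>) *
      monomial_value (partial_eval {N - M..<N} x) \<alpha>) (herald_monomial N M m)"
    using heralding_condition_iff[OF assms, of \<alpha> m]
    by (auto simp: poly_eval_single lookup_single_zero_mult monomial_value_partial_eval
        lookup_single when_def)
qed simp

lemma poly_subst_output_poly_translate:
  assumes v_heralded: "\<And>j. j \<in> H \<Longrightarrow> v j = 0"
    and v_kernel: "\<And>i. i < N \<Longrightarrow> n i \<noteq> 0 \<Longrightarrow> (\<Sum>j<N. A i j * v j) = 0"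
  shows "poly_subst (partial_eval H (\<lambda>j. x j + v j)) (output_poly N A n) =
    poly_subst (partial_eval H x) (output_poly N A n)"
proof -
  have "partial_eval H (\<lambda>j. x j + v j) j = partial_eval H x j + cconst (v j)" for j
    using v_heralded[of j] by (auto simp: partial_eval_def cconst_add)
  then have linear_form:
    "poly_subst (partial_eval H (\<lambda>j. x j + v j)) (\<Sum>j<N. cconst (A i j) * cvar j) =
      poly_subst (partial_eval H x) (\<Sum>j<N. cconst (A i j) * cvar j) + cconst (\<Sum>j<N. A i j * v j)"
    for i
    by (simp add: poly_subst_sum poly_subst_mult distrib_left sum.distrib cconst_sum cconst_mult)
  have "poly_subst (partial_eval H (\<lambda>j. x j + v j)) (\<Sum>j<N. cconst (A i j) * cvar j) ^ n i =
      poly_subst (partial_eval H x) (\<Sum>j<N. cconst (A i j) * cvar j) ^ n i" if "i < N" for i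
    using v_kernel[OF that] by (cases "n i = 0") (simp_all add: linear_form)
  then show ?thesis
    unfolding output_poly_def poly_subst_prod poly_subst_mult poly_subst_power poly_subst_cconst
    by (intro prod.cong) auto
qed

lemma herald_output_poly_translate:
  assumes "M \<le> N"
    and "\<And>j. j \<in> {N - M..<N} \<Longrightarrow> v j = 0"
    and "\<And>i. i < N \<Longrightarrow> n i \<noteq> 0 \<Longrightarrow> (\<Sum>j<N. A i j * v j) = 0"
  shows "poly_eval (\<lambda>j. x j + v j) (herald N M m (output_poly N A n)) =
    poly_eval x (herald N M m (output_poly N A n))"
proof -
  have "poly_subst (partial_eval {N - M..<N} (\<lambda>j. x j + v j)) (output_poly N A n) =
      poly_subst (partial_eval {N - M..<N} x) (output_poly N A n)"
    by (rule poly_subst_output_poly_translate) (use assms in auto)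
  then show ?thesis
    by (simp add: poly_eval_herald[OF assms(1)])
qed

section \<open>Linear algebra\<close>

lemma homogeneous_system_nontrivial_solution:
  fixes a :: "'r \<Rightarrow> nat \<Rightarrow> 'a::idom"
  assumes "finite R" and "card R < n"
  shows "\<exists>v. (\<exists>j<n. v j \<noteq> 0) \<and> (\<forall>j\<ge>n. v j = 0) \<and> (\<forall>r\<in>R. (\<Sum>j<n. a r j * v j) = 0)"
proof -
  obtain f where f: "bij_betw f {0..<card R} R"
    using ex_bij_betw_nat_finite[OF assms(1)] by blast
  define B where "B = mat\<^sub>r n n (\<lambda>i. if i = n - 1 then 0\<^sub>v n else vec n (a (f i)))"
  have "det B = 0"
    unfolding B_def by (rule det_row_0) (use assms(2) in auto)
  then obtain w where w: "w \<in> carrier_vec n" "w \<noteq> 0\<^sub>v n" "B *\<^sub>v w = 0\<^sub>v n"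
    using det_0_iff_vec_prod_zero[of B n] by (auto simp: B_def)
  define v where "v j = (if j < n then w $ j else 0)" for j
  have "\<exists>j<n. v j \<noteq> 0"
    using w(1,2) by (auto simp: v_def vec_eq_iff)
  moreover have "(\<Sum>j<n. a r j * v j) = 0" if "r \<in> R" for r
  proof -
    have "r \<in> f ` {0..<card R}"
      using f that by (simp add: bij_betw_def)
    then obtain i where i: "i < card R" "r = f i"
      by auto
    then have "i < n" "i \<noteq> n - 1"
      using assms(2) by auto
    then have "(B *\<^sub>v w) $ i = (\<Sum>j<n. a r j * w $ j)"
      using w(1) i(2) by (simp add: B_def scalar_prod_def lessThan_atLeast0)
    then show ?thesis
      using w(3) \<open>i < n\<close> by (simp add: v_def)
  qed
  ultimately show ?thesis
    by (auto simp: v_def)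
qed

section \<open>The dual-rail Bell state\<close>

lemma poly_eval_bell_dual_rail:
  "poly_eval x bell_dual_rail = (x 0 * x 2 + x 1 * x 3) / complex_of_real (sqrt 2)"
  by (simp add: bell_dual_rail_def poly_eval_mult poly_eval_add)

lemma bell_dual_rail_translation_invariant_imp_zero:
  assumes "\<And>x. poly_eval (\<lambda>j. x j + v j) bell_dual_rail = poly_eval x bell_dual_rail"
  shows "\<forall>j<4. v j = 0"
proof -
  have q: "(x 0 + v 0) * (x 2 + v 2) + (x 1 + v 1) * (x 3 + v 3) = x 0 * x 2 + x 1 * x 3"
    for x :: "nat \<Rightarrow> complex"
    using assms[of x] by (simp add: poly_eval_bell_dual_rail)
  have q0: "v 0 * v 2 + v 1 * v 3 = 0"
    using q[of "\<lambda>_. 0"] by simp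
  have linear: "x 0 * v 2 + x 2 * v 0 + x 1 * v 3 + x 3 * v 1 = 0" for x :: "nat \<Rightarrow> complex"
  proof -
    have "x 0 * v 2 + x 2 * v 0 + x 1 * v 3 + x 3 * v 1 =
        ((x 0 + v 0) * (x 2 + v 2) + (x 1 + v 1) * (x 3 + v 3)) - (x 0 * x 2 + x 1 * x 3) -
        (v 0 * v 2 + v 1 * v 3)"
      by (simp add: algebra_simps)
    then show ?thesis
      using q[of x] q0 by simp
  qed
  have "v 0 = 0" "v 1 = 0" "v 2 = 0" "v 3 = 0"
    using linear[of "\<lambda>j. if j = 2 then 1 else 0"] linear[of "\<lambda>j. if j = 3 then 1 else 0"]
      linear[of "\<lambda>j. if j = 0 then 1 else 0"] linear[of "\<lambda>j. if j = 1 then 1 else 0"]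
    by simp_all
  then show ?thesis
    by (auto simp: less_Suc_eq numeral_eq_Suc)
qed

lemma bell_dual_rail_not_generable_from_three_photons:
  assumes "M \<le> N" and "4 \<le> N - M" and "(\<Sum>i<N. n i) = 3"
  shows "\<not> generable_from bell_dual_rail N n M m"
proof
  assume "generable_from bell_dual_rail N n M m"
  then obtain A \<gamma> where gen: "cconst \<gamma> * herald N M m (output_poly N A n) = bell_dual_rail"
    unfolding generable_from_def by blast
  let ?occupied = "{i. i < N \<and> n i \<noteq> 0}"
  have "card ?occupied \<le> (\<Sum>i\<in>?occupied. n i)"
    using card_eq_sum sum_mono[of ?occupied "\<lambda>_. 1::nat" n] by fastforce
  also have "\<dots> \<le> (\<Sum>i<N. n i)"
    by (rule sum_mono2) auto
  finally have "card ?occupied < 4"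
    using assms(3) by simp
  then obtain v :: "nat \<Rightarrow> complex" where
    v: "\<exists>j<4. v j \<noteq> 0" "\<forall>j\<ge>4. v j = 0" "\<forall>i\<in>?occupied. (\<Sum>j<4. A i j * v j) = 0"
    using homogeneous_system_nontrivial_solution[of ?occupied 4 A] by auto
  have "(\<Sum>j<N. A i j * v j) = (\<Sum>j<4. A i j * v j)" for i
    by (rule sum.mono_neutral_right) (use assms(2) v(2) in auto)
  then have "poly_eval (\<lambda>j. x j + v j) (herald N M m (output_poly N A n)) =
      poly_eval x (herald N M m (output_poly N A n))" for x
    by (intro herald_output_poly_translate) (use assms v in auto)
  then have "poly_eval (\<lambda>j. x j + v j) bell_dual_rail = poly_eval x bell_dual_rail" for x
    by (simp flip: gen add: poly_eval_mult)
  then have "\<forall>j<4. v j = 0"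
    by (rule bell_dual_rail_translation_invariant_imp_zero)
  with v(1) show False
    by blast
qed

theorem mainTheorem3:
  shows "(\<forall>N M (n :: nat \<Rightarrow> nat) (m :: nat \<Rightarrow> nat).
            M \<le> N \<longrightarrow> 4 \<le> N - M \<longrightarrow> (\<Sum>i<N. n i) = 3 \<longrightarrow>
            \<not> generable_from bell_dual_rail N n M m)
       \<and> \<not> generable_from bell_dual_rail 5 (\<lambda>i. if i < 3 then 1 else 0) 1 (\<lambda>k. 1)"
proof
  show "\<forall>N M (n :: nat \<Rightarrow> nat) (m :: nat \<Rightarrow> nat).
            M \<le> N \<longrightarrow> 4 \<le> N - M \<longrightarrow> (\<Sum>i<N. n i) = 3 \<longrightarrow>
            \<not> generable_from bell_dual_rail N n M m"
    using bell_dual_rail_not_generable_from_three_photons by blast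
  show "\<not> generable_from bell_dual_rail 5 (\<lambda>i. if i < 3 then 1 else 0) 1 (\<lambda>k. 1)"
    by (rule bell_dual_rail_not_generable_from_three_photons) (simp_all add: numeral_eq_Suc)
qed

end
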